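(* Let $\Gamma$ be a group and $S$ a $\Gamma$-graded inverse semigroup. Then $S$ is $0$-$E$-unitary if and only if the inverse semigroup $S_\varepsilon$ is $0$-$E$-unitary.
   Context: Semigroups have a zero; $S$ is $\Gamma$-graded via $\deg:S\setminus\{0\}\to\Gamma$ with $\deg(st)=\deg(s)\deg(t)$ whenever $st\neq0$; $S_\alpha=\deg^{-1}(\alpha)\cup\{0\}$; $\varepsilon$ is the identity of $\Gamma$. $E(S)$ is the set of idempotents. The natural partial order on an inverse semigroup: $s\le t$ iff $s=tu$ for some $u\in E(S)$. An inverse semigroup $S$ with zero is $0$-$E$-unitary if for all $s\in S$ and $u\in E(S)\setminus\{0\}$ with $u\le s$, one has $s\in E(S)$. *)

theory Defs
  imports "HOL-Algebra.Group"
begin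

definition semigroup_on :: "'a set \<Rightarrow> ('a \<Rightarrow> 'a \<Rightarrow> 'a) \<Rightarrow> bool" where
  "semigroup_on S m \<longleftrightarrow> (\<forall>x\<in>S. \<forall>y\<in>S. m x y \<in> S) \<and>
     (\<forall>x\<in>S. \<forall>y\<in>S. \<forall>w\<in>S. m (m x y) w = m x (m y w))"

definition has_zero :: "'a set \<Rightarrow> ('a \<Rightarrow> 'a \<Rightarrow> 'a) \<Rightarrow> 'a \<Rightarrow> bool" where
  "has_zero S m z \<longleftrightarrow> z \<in> S \<and> (\<forall>x\<in>S. m z x = z \<and> m x z = z)"

definition idems :: "'a set \<Rightarrow> ('a \<Rightarrow> 'a \<Rightarrow> 'a) \<Rightarrow> 'a set" where
  "idems S m = {e\<in>S. m e e = e}"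

definition inverse_semigroup_on :: "'a set \<Rightarrow> ('a \<Rightarrow> 'a \<Rightarrow> 'a) \<Rightarrow> bool" where
  "inverse_semigroup_on S m \<longleftrightarrow> semigroup_on S m \<and>
     (\<forall>s\<in>S. \<exists>!t. t \<in> S \<and> m (m s t) s = s \<and> m (m t s) t = t)"

definition nat_le :: "'a set \<Rightarrow> ('a \<Rightarrow> 'a \<Rightarrow> 'a) \<Rightarrow> 'a \<Rightarrow> 'a \<Rightarrow> bool" where
  "nat_le S m s t \<longleftrightarrow> (\<exists>u\<in>idems S m. s = m t u)"

definition zero_E_unitary :: "'a set \<Rightarrow> ('a \<Rightarrow> 'a \<Rightarrow> 'a) \<Rightarrow> 'a \<Rightarrow> bool" where
  "zero_E_unitary S m z \<longleftrightarrow>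
     (\<forall>s\<in>S. \<forall>u\<in>idems S m - {z}. nat_le S m u s \<longrightarrow> s \<in> idems S m)"

definition graded :: "('g, 'b) monoid_scheme \<Rightarrow> 'a set \<Rightarrow> ('a \<Rightarrow> 'a \<Rightarrow> 'a) \<Rightarrow> 'a \<Rightarrow> ('a \<Rightarrow> 'g) \<Rightarrow> bool" where
  "graded G S m z deg \<longleftrightarrow> (\<forall>s\<in>S - {z}. deg s \<in> carrier G) \<and>
     (\<forall>s\<in>S - {z}. \<forall>t\<in>S - {z}. m s t \<noteq> z \<longrightarrow> deg (m s t) = deg s \<otimes>\<^bsub>G\<^esub> deg t)"

definition homog :: "'a set \<Rightarrow> 'a \<Rightarrow> ('a \<Rightarrow> 'g) \<Rightarrow> 'g \<Rightarrow> 'a set" where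
  "homog S z deg \<alpha> = {s \<in> S - {z}. deg s = \<alpha>} \<union> {z}"

end

theory Submission
  imports Defs
begin

text \<open>A nonzero idempotent \<open>e\<close> satisfies \<open>deg e = deg e \<cdot> deg e\<close>, so it has degree \<open>\<epsilon>\<close>
  by cancellation in \<open>\<Gamma>\<close>. Hence \<open>S\<close> and \<open>S\<^sub>\<epsilon>\<close> have the same idempotents and the same natural
  order below them. Moreover, if a nonzero idempotent \<open>u = s v\<close> (with \<open>v\<close> idempotent) lies
  below \<open>s\<close>, then \<open>\<epsilon> = deg u = deg s \<cdot> deg v = deg s\<close>, so \<open>s \<in> S\<^sub>\<epsilon>\<close>: every instance of
  the \<open>0\<close>-\<open>E\<close>-unitary condition for \<open>S\<close> already lives in \<open>S\<^sub>\<epsilon>\<close>.\<close>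

lemma graded_deg_idem:
  assumes "group G" "graded G S m z deg" "e \<in> idems S m" "e \<noteq> z"
  shows "deg e = \<one>\<^bsub>G\<^esub>"
proof -
  have "e \<in> S" "m e e = e" using assms(3) by (auto simp: idems_def)
  with assms(2,4) have "deg e \<in> carrier G" "deg e = deg e \<otimes>\<^bsub>G\<^esub> deg e"
    unfolding graded_def by (metis DiffI singletonD)+
  then show ?thesis using group.l_cancel_one'[OF assms(1)] by metis
qed

lemma homog_subset:
  assumes "has_zero S m z"
  shows "homog S z deg \<alpha> \<subseteq> S"
  using assms by (auto simp: homog_def has_zero_def)

lemma idems_homog_one:
  assumes "group G" "has_zero S m z" "graded G S m z deg"
  shows "idems (homog S z deg \<one>\<^bsub>G\<^esub>) m = idems S m"
proof
  show "idems (homog S z deg \<one>\<^bsub>G\<^esub>) m \<subseteq> idems S m"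
    using homog_subset[OF assms(2), of deg "\<one>\<^bsub>G\<^esub>"] by (auto simp: idems_def)
  show "idems S m \<subseteq> idems (homog S z deg \<one>\<^bsub>G\<^esub>) m"
    using graded_deg_idem[OF assms(1,3)] by (auto simp: idems_def homog_def)
qed

lemma nat_le_cong_idems:
  assumes "idems T m = idems S m"
  shows "nat_le T m = nat_le S m"
  using assms by (simp add: nat_le_def fun_eq_iff)

lemma graded_deg_above_idem:
  assumes "group G" "has_zero S m z" "graded G S m z deg"
    and "s \<in> S" "u \<in> idems S m" "u \<noteq> z" "nat_le S m u s"
  shows "deg s = \<one>\<^bsub>G\<^esub>"
proof -
  obtain v where v: "v \<in> idems S m" and u_eq: "u = m s v"
    using assms(7) by (auto simp: nat_le_def)
  have "v \<in> S" using v by (auto simp: idems_def)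
  have "s \<noteq> z" "v \<noteq> z"
    using assms(2,4,6) \<open>v \<in> S\<close> u_eq by (auto simp: has_zero_def)
  have "deg u = deg s \<otimes>\<^bsub>G\<^esub> deg v"
    using assms(3,4,6) \<open>v \<in> S\<close> \<open>s \<noteq> z\<close> \<open>v \<noteq> z\<close> u_eq by (auto simp: graded_def)
  moreover have "deg u = \<one>\<^bsub>G\<^esub>" "deg v = \<one>\<^bsub>G\<^esub>"
    using graded_deg_idem[OF assms(1,3)] assms(5,6) v \<open>v \<noteq> z\<close> by auto
  moreover have "deg s \<in> carrier G" using assms(3,4) \<open>s \<noteq> z\<close> by (auto simp: graded_def)
  ultimately show ?thesis using group.is_monoid[OF assms(1)] by (simp add: monoid.r_one)
qed

lemma zero_E_unitary_subset:
  assumes "zero_E_unitary S m z" "T \<subseteq> S" "idems T m = idems S m"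
  shows "zero_E_unitary T m z"
  using assms(1,2) unfolding zero_E_unitary_def nat_le_cong_idems[OF assms(3)] assms(3)
  by (meson subsetD)

theorem proposition2p6:
  fixes G :: "('g, 'b) monoid_scheme" and S :: "'a set" and m :: "'a \<Rightarrow> 'a \<Rightarrow> 'a"
    and z :: 'a and deg :: "'a \<Rightarrow> 'g"
  assumes "group G"
    and "inverse_semigroup_on S m"
    and "has_zero S m z"
    and "graded G S m z deg"
  shows "zero_E_unitary S m z \<longleftrightarrow> zero_E_unitary (homog S z deg \<one>\<^bsub>G\<^esub>) m z"
proof
  let ?T = "homog S z deg \<one>\<^bsub>G\<^esub>"
  have same_idems: "idems ?T m = idems S m"
    using idems_homog_one[OF assms(1,3,4)] .
  show "zero_E_unitary S m z \<Longrightarrow> zero_E_unitary ?T m z"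
    using zero_E_unitary_subset homog_subset[OF assms(3)] same_idems by metis
  assume T_unitary: "zero_E_unitary ?T m z"
  show "zero_E_unitary S m z"
    unfolding zero_E_unitary_def
  proof (intro ballI impI)
    fix s u assume "s \<in> S" "u \<in> idems S m - {z}" "nat_le S m u s"
    then have "s \<in> ?T"
      using graded_deg_above_idem[OF assms(1,3,4)] by (auto simp: homog_def)
    then show "s \<in> idems S m"
      using T_unitary \<open>u \<in> idems S m - {z}\<close> \<open>nat_le S m u s\<close>
      unfolding zero_E_unitary_def same_idems nat_le_cong_idems[OF same_idems] by blast
  qed
qed

end
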